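(* Let $T$ be an interface element and $\overline X\in l$ fixed. Define the piecewise $2\times4$ matrix function $V(X)=(X-\overline X)^T\otimes I_2$ for $X\in\overline T^+$ and $V(X)=\big((X-\overline X)^T\otimes I_2\big)\overline M^+$ for $X\in\overline T^-$. Then each column of $V$ is an IFE function on $T$ (with respect to any $F\in l$), i.e., it belongs to the local IFE space $\mathbf S_h(T)$.
   Context: Lamé parameters $\lambda^\pm,\mu^\pm>0$; stress $\sigma^s(\mathbf v)=\lambda^s(\nabla\cdot\mathbf v)I+2\mu^s\epsilon(\mathbf v)$. $T$ is a triangle with $\Pi_T=[\mathrm{span}\{1,x,y\}]^2$, or a square with $\Pi_T=[\mathrm{span}\{1,x,y,xy\}]^2$ or $[\mathrm{span}\{1,x,y,x^2-y^2\}]^2$. $\Gamma$ meets $\partial T$ at $D,E$; $l$ is the line through them with unit normal $\bar{\mathbf n}=(\bar n_1,\bar n_2)$, splitting $T$ into $\overline T^\pm$. An IFE function w.r.t. $F\in l$ is piecewise $\boldsymbol\phi^s\in\Pi_T$ on $\overline T^s$ with $\boldsymbol\phi^-=\boldsymbol\phi^+$ on $l$, (square cases) equal coefficient vectors of $xy$ (resp. $x^2-y^2$) in $\boldsymbol\phi^\pm$, and $\sigma^+(\boldsymbol\phi^+)(F)\bar{\mathbf n}=\sigma^-(\boldsymbol\phi^-)(F)\bar{\mathbf n}$; $\mathbf S_h(T)$ is the space of these functions (assumed unisolvent, i.e. spanned by the nodal IFE shape functions). $\overline N^s$ is the $4\times4$ matrix with rows $((\lambda^s+2\mu^s)\bar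 n_1,\mu^s\bar n_2,\mu^s\bar n_2,\lambda^s\bar n_1)$, $(\lambda^s\bar n_2,\mu^s\bar n_1,\mu^s\bar n_1,(\lambda^s+2\mu^s)\bar n_2)$, $(-\bar n_2,0,\bar n_1,0)$, $(0,-\bar n_2,0,\bar n_1)$; $\overline M^+=(\overline N^-)^{-1}\overline N^+$. $\otimes$ is the Kronecker product. *)

theory Defs
  imports "HOL-Analysis.Analysis"
begin

text \<open>Element types: triangle with P1, square with Q1 (span 1,x,y,xy),
  square with rotated Q1 (span 1,x,y,x^2-y^2).\<close>
datatype elem_kind = Tri | SqQ1 | SqRotQ1

definition qfun :: "elem_kind \<Rightarrow> real^2 \<Rightarrow> real" where
  "qfun k X = (case k of Tri \<Rightarrow> 0 | SqQ1 \<Rightarrow> X$1 * X$2 | SqRotQ1 \<Rightarrow> (X$1)^2 - (X$2)^2)"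

definition polyT :: "elem_kind \<Rightarrow> (nat \<Rightarrow> real^2) \<Rightarrow> real^2 \<Rightarrow> real^2" where
  "polyT k c X = c 0 + (X$1) *\<^sub>R c 1 + (X$2) *\<^sub>R c 2 + qfun k X *\<^sub>R c 3"

definition PiT :: "elem_kind \<Rightarrow> (real^2 \<Rightarrow> real^2) set" where
  "PiT k = range (polyT k)"

definition pd :: "(real^2 \<Rightarrow> real^2) \<Rightarrow> 2 \<Rightarrow> 2 \<Rightarrow> real^2 \<Rightarrow> real" where
  "pd v i j X = deriv (\<lambda>t. v (X + t *\<^sub>R axis j 1) $ i) 0"

definition stress :: "real \<Rightarrow> real \<Rightarrow> (real^2 \<Rightarrow> real^2) \<Rightarrow> real^2 \<Rightarrow> real^2^2" where
  "stress lam mu v X = (\<chi> i j. lam * (pd v 1 1 X + pd v 2 2 X) * (if i = j then 1 else 0)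
                              + mu * (pd v i j X + pd v j i X))"

definition is_IFE ::
  "elem_kind \<Rightarrow> real \<Rightarrow> real \<Rightarrow> real \<Rightarrow> real \<Rightarrow> real^2 \<Rightarrow> (real^2) set \<Rightarrow> (real^2) set
    \<Rightarrow> (real^2) set \<Rightarrow> real^2 \<Rightarrow> (real^2 \<Rightarrow> real^2) \<Rightarrow> bool" where
  "is_IFE k lamp mup lamm mum nbar Tp Tm l F v \<longleftrightarrow>
     (\<exists>cp cm. (\<forall>X\<in>Tp. v X = polyT k cp X) \<and> (\<forall>X\<in>Tm. v X = polyT k cm X)
        \<and> (\<forall>X\<in>l. polyT k cm X = polyT k cp X)
        \<and> (k \<noteq> Tri \<longrightarrow> cp 3 = cm 3)
        \<and> stress lamp mup (polyT k cp) F *v nbar = stress lamm mum (polyT k cm) F *v nbar)"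

definition Sh ::
  "elem_kind \<Rightarrow> real \<Rightarrow> real \<Rightarrow> real \<Rightarrow> real \<Rightarrow> real^2 \<Rightarrow> (real^2) set \<Rightarrow> (real^2) set
    \<Rightarrow> (real^2) set \<Rightarrow> real^2 \<Rightarrow> (real^2 \<Rightarrow> real^2) set" where
  "Sh k lamp mup lamm mum nbar Tp Tm l F = {v. is_IFE k lamp mup lamm mum nbar Tp Tm l F v}"

definition Nmat :: "real \<Rightarrow> real \<Rightarrow> real^2 \<Rightarrow> real^4^4" where
  "Nmat lam mu n = vector
     [ vector [(lam + 2*mu) * n$1, mu * n$2, mu * n$2, lam * n$1],
       vector [lam * n$2, mu * n$1, mu * n$1, (lam + 2*mu) * n$2],
       vector [- n$2, 0, n$1, 0],
       vector [0, - n$2, 0, n$1] ]"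

definition kron_I2 :: "real^2 \<Rightarrow> real^4^2" where
  "kron_I2 w = vector [ vector [w$1, 0, w$2, 0], vector [0, w$1, 0, w$2] ]"

definition admissible_elem :: "elem_kind \<Rightarrow> (real^2) set \<Rightarrow> bool" where
  "admissible_elem k T \<longleftrightarrow>
     (if k = Tri then (\<exists>A B C. \<not> collinear {A, B, C} \<and> T = convex hull {A, B, C})
      else (\<exists>a h. h > 0 \<and> T = cbox a (a + h *\<^sub>R vec 1)))"

end

theory Submission
  imports Defs
begin

text \<open>
  On \<open>T\<^sup>+\<close> the column is the affine function \<open>X \<mapsto> ((X - Xbar)\<^sup>T \<otimes> I\<^sub>2) c\<close> and on \<open>T\<^sup>-\<close>
  the affine function with coefficient vector \<open>d = M\<^sup>+ c\<close>, so both pieces lie in \<open>\<Pi>\<^sub>T\<close> with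
  zero extra coefficient. An affine function has constant stress, and \<open>\<sigma>(v)n\<close> is exactly
  the first two rows of \<open>N c\<close>, so \<open>N\<^sup>- d = N\<^sup>+ c\<close> gives traction continuity at every \<open>F\<close>.
  The last two rows of \<open>N\<close> give the tangential combinations of \<open>c\<close>, and since
  \<open>X - Xbar\<close> is tangential on \<open>l\<close> they also give continuity across \<open>l\<close>.
\<close>

lemma vector_4_nth [simp]:
  "(vector [x, y, z, w] :: ('a::zero)^4) $ 1 = x"
  "(vector [x, y, z, w] :: ('a::zero)^4) $ 2 = y"
  "(vector [x, y, z, w] :: ('a::zero)^4) $ 3 = z"
  "(vector [x, y, z, w] :: ('a::zero)^4) $ 4 = w"
  unfolding vector_def by simp_all

lemma matrix_mul_matrix_inv:
  fixes A :: "'a::semiring_1^'n^'m"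
  assumes "invertible A"
  shows "A ** matrix_inv A = mat 1"
  using someI_ex[OF assms[unfolded invertible_def]] by (simp add: matrix_inv_def)

lemma column_matrix_mul: "column j (A ** B) = A *v column j B"
  by (simp add: column_def matrix_matrix_mult_def matrix_vector_mult_def vec_eq_iff)

lemma norm_eq_1_vec2:
  fixes n :: "real^2"
  assumes "norm n = 1"
  shows "n$1 * n$1 + n$2 * n$2 = 1"
  using assms by (simp add: norm_eq_1 inner_vec_def sum_2)

lemma Nmat_mult_vec_nth:
  "(Nmat lam mu n *v c)$1 = (lam + 2*mu) * n$1 * c$1 + mu * n$2 * c$2 + mu * n$2 * c$3 + lam * n$1 * c$4"
  "(Nmat lam mu n *v c)$2 = lam * n$2 * c$1 + mu * n$1 * c$2 + mu * n$1 * c$3 + (lam + 2*mu) * n$2 * c$4"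
  "(Nmat lam mu n *v c)$3 = - n$2 * c$1 + n$1 * c$3"
  "(Nmat lam mu n *v c)$4 = - n$2 * c$2 + n$1 * c$4"
  by (simp_all add: Nmat_def matrix_vector_mult_def sum_4 algebra_simps)

text \<open>Each \<open>\<mu>(\<lambda> + 2\<mu>) c\<^sub>i\<close> is a polynomial combination of the four rows, using \<open>n\<^sub>1\<^sup>2 + n\<^sub>2\<^sup>2 = 1\<close>.\<close>
lemma Nmat_invertible:
  assumes "lam > 0" "mu > 0" "norm n = 1"
  shows "invertible (Nmat lam mu n)"
  unfolding invertible_left_inverse matrix_left_invertible_ker
proof (intro allI impI)
  fix c :: "real^4"
  assume "Nmat lam mu n *v c = 0"
  then have rows: "(Nmat lam mu n *v c)$i = 0" for i by simp
  note eqs = rows[of 1] rows[of 2] rows[of 3] rows[of 4] norm_eq_1_vec2[OF assms(3)]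
  have "mu * (lam + 2*mu) * c$i = 0" for i
  proof -
    have "mu * (lam + 2*mu) * c$1 = 0" "mu * (lam + 2*mu) * c$2 = 0"
      "mu * (lam + 2*mu) * c$3 = 0" "mu * (lam + 2*mu) * c$4 = 0"
      using eqs unfolding Nmat_mult_vec_nth by algebra+
    then show ?thesis using exhaust_4[of i] by auto
  qed
  moreover have "mu * (lam + 2*mu) \<noteq> 0" using assms by simp
  ultimately show "c = 0" by (simp add: vec_eq_iff)
qed

definition kron_coeffs :: "real^2 \<Rightarrow> real^4 \<Rightarrow> nat \<Rightarrow> real^2" where
  "kron_coeffs Xb c i =
     (if i = 0 then - (Xb$1 *\<^sub>R vector [c$1, c$2] + Xb$2 *\<^sub>R vector [c$3, c$4])
      else if i = 1 then vector [c$1, c$2]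
      else if i = 2 then vector [c$3, c$4] else 0)"

lemma kron_I2_mult_vec_eq_polyT: "kron_I2 (X - Xb) *v c = polyT k (kron_coeffs Xb c) X"
  by (simp add: vec_eq_iff forall_2 kron_I2_def matrix_vector_mult_def sum_4 polyT_def
      kron_coeffs_def algebra_simps)

lemma pd_polyT_affine:
  assumes "c 3 = 0"
  shows "pd (polyT k c) i j F = (if j = 1 then c 1 $ i else c 2 $ i)"
proof -
  define a where "a = (c 0 + F$1 *\<^sub>R c 1 + F$2 *\<^sub>R c 2) $ i"
  define b where "b = axis j 1 $ 1 * c 1 $ i + (axis j 1 :: real^2) $ 2 * c 2 $ i"
  have line: "(\<lambda>t. polyT k c (F + t *\<^sub>R axis j 1) $ i) = (\<lambda>t. a + t * b)"
    by (simp add: polyT_def fun_eq_iff algebra_simps assms a_def b_def)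
  have "deriv (\<lambda>t. a + t * b) 0 = b"
    by (rule DERIV_imp_deriv) (auto intro!: derivative_eq_intros)
  then have "pd (polyT k c) i j F = b" by (simp add: pd_def line)
  then show ?thesis using exhaust_2[of j] by (auto simp: b_def axis_def)
qed

lemma stress_kron_traction:
  "stress lam mu (polyT k (kron_coeffs Xb c)) F *v n =
     vector [(Nmat lam mu n *v c)$1, (Nmat lam mu n *v c)$2]"
  by (simp add: vec_eq_iff forall_2 Nmat_mult_vec_nth stress_def matrix_vector_mult_def sum_2
      pd_polyT_affine kron_coeffs_def Nmat_def sum_4 algebra_simps)

text \<open>Rows 3 and 4 of \<open>N\<close> are the tangential parts of the two \<open>2\<times>2\<close> blocks of \<open>c\<close>.\<close>
lemma kron_I2_mult_vec_eq_if_tangential: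
  fixes w n :: "real^2" and c d :: "real^4"
  assumes "w \<bullet> n = 0" "norm n = 1"
    and "Nmat lam mu n *v c = Nmat lam' mu' n *v d"
  shows "kron_I2 w *v c = kron_I2 w *v d"
proof -
  have "(Nmat lam mu n *v c)$3 = (Nmat lam' mu' n *v d)$3"
    "(Nmat lam mu n *v c)$4 = (Nmat lam' mu' n *v d)$4"
    using assms(3) by simp_all
  note eqs = this[unfolded Nmat_mult_vec_nth] norm_eq_1_vec2[OF assms(2)]
    assms(1)[unfolded inner_vec_def sum_2]
  have "w$1 * c$1 + w$2 * c$3 = w$1 * d$1 + w$2 * d$3"
    "w$1 * c$2 + w$2 * c$4 = w$1 * d$2 + w$2 * d$4"
    using eqs by (simp_all add: inner_vec_def) algebra+
  then show ?thesis by (simp add: vec_eq_iff forall_2 kron_I2_def matrix_vector_mult_def sum_4)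
qed

lemma piecewise_kron_in_Sh:
  fixes Xb n :: "real^2" and c d :: "real^4"
  assumes "norm n = 1"
    and on_l: "\<And>X. X \<in> l \<Longrightarrow> (X - Xb) \<bullet> n = 0"
    and overlap: "\<And>X. X \<in> Tp \<Longrightarrow> X \<in> Tm \<Longrightarrow> (X - Xb) \<bullet> n = 0"
    and traction: "Nmat lamm mum n *v d = Nmat lamp mup n *v c"
  shows "(\<lambda>X. if X \<in> Tp then kron_I2 (X - Xb) *v c else kron_I2 (X - Xb) *v d)
           \<in> Sh k lamp mup lamm mum n Tp Tm l F"
proof -
  have cont: "kron_I2 (X - Xb) *v d = kron_I2 (X - Xb) *v c" if "(X - Xb) \<bullet> n = 0" for X
    using kron_I2_mult_vec_eq_if_tangential[OF that assms(1) traction] .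
  show ?thesis
    unfolding Sh_def is_IFE_def mem_Collect_eq
  proof (intro exI conjI ballI impI)
    show "(if X \<in> Tp then kron_I2 (X - Xb) *v c else kron_I2 (X - Xb) *v d)
            = polyT k (kron_coeffs Xb c) X" if "X \<in> Tp" for X
      using that by (simp add: kron_I2_mult_vec_eq_polyT)
    show "(if X \<in> Tp then kron_I2 (X - Xb) *v c else kron_I2 (X - Xb) *v d)
            = polyT k (kron_coeffs Xb d) X" if "X \<in> Tm" for X
      using that overlap cont by (simp add: kron_I2_mult_vec_eq_polyT[symmetric])
    show "polyT k (kron_coeffs Xb d) X = polyT k (kron_coeffs Xb c) X" if "X \<in> l" for X
      using cont[OF on_l[OF that]] by (simp add: kron_I2_mult_vec_eq_polyT[of X Xb _ k])
    show "kron_coeffs Xb c 3 = kron_coeffs Xb d 3" by (simp add: kron_coeffs_def)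
    show "stress lamp mup (polyT k (kron_coeffs Xb c)) F *v n =
          stress lamm mum (polyT k (kron_coeffs Xb d)) F *v n"
      using traction by (simp add: stress_kron_traction)
  qed
qed

theorem mainTheorem14:
  fixes k :: elem_kind and T \<Gamma> :: "(real^2) set" and D E nbar Xbar :: "real^2"
    and lamp mup lamm mum :: real
  assumes "lamp > 0" "mup > 0" "lamm > 0" "mum > 0"
    and "admissible_elem k T"
    and "D \<noteq> E" "\<Gamma> \<inter> frontier T = {D, E}"
    and "open_segment D E \<subseteq> interior T"
    and "norm nbar = 1" "nbar \<bullet> (E - D) = 0"
    and "Xbar \<in> {X. \<exists>t::real. X = D + t *\<^sub>R (E - D)}"
  shows
    "let l = {X. \<exists>t::real. X = D + t *\<^sub>R (E - D)};
         Tp = {X \<in> T. (X - D) \<bullet> nbar \<ge> 0};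
         Tm = {X \<in> T. (X - D) \<bullet> nbar \<le> 0};
         Mp = matrix_inv (Nmat lamm mum nbar) ** Nmat lamp mup nbar;
         V = (\<lambda>X. if X \<in> Tp then kron_I2 (X - Xbar) else kron_I2 (X - Xbar) ** Mp)
     in \<forall>F\<in>l. \<forall>j::4. (\<lambda>X. column j (V X)) \<in> Sh k lamp mup lamm mum nbar Tp Tm l F"
proof -
  define l where "l = {X. \<exists>t::real. X = D + t *\<^sub>R (E - D)}"
  define Tp where "Tp = {X \<in> T. (X - D) \<bullet> nbar \<ge> 0}"
  define Tm where "Tm = {X \<in> T. (X - D) \<bullet> nbar \<le> 0}"
  define Mp where "Mp = matrix_inv (Nmat lamm mum nbar) ** Nmat lamp mup nbar"
  obtain s where Xbar: "Xbar = D + s *\<^sub>R (E - D)" using assms(11) by blast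
  have on_l: "(X - Xbar) \<bullet> nbar = 0" if X: "X \<in> l" for X
  proof -
    obtain t where "X = D + t *\<^sub>R (E - D)" using X l_def by blast
    then have "X - Xbar = (t - s) *\<^sub>R (E - D)" by (simp add: Xbar algebra_simps)
    then show ?thesis using assms(10) by (simp add: inner_commute)
  qed
  have overlap: "(X - Xbar) \<bullet> nbar = 0" if "X \<in> Tp" "X \<in> Tm" for X
    using that on_l[of D] by (auto simp: Tp_def Tm_def l_def inner_diff_left)
  have "Nmat lamm mum nbar ** Mp = Nmat lamp mup nbar"
    using matrix_mul_matrix_inv[OF Nmat_invertible[OF assms(3,4,9)]]
    by (simp add: Mp_def matrix_mul_assoc)
  then have traction: "Nmat lamm mum nbar *v (Mp *v axis j 1) = Nmat lamp mup nbar *v axis j 1"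
    for j :: 4
    by (simp add: matrix_vector_mul_assoc)
  have "(\<lambda>X. column j (if X \<in> Tp then kron_I2 (X - Xbar) else kron_I2 (X - Xbar) ** Mp))
      = (\<lambda>X. if X \<in> Tp then kron_I2 (X - Xbar) *v axis j 1
             else kron_I2 (X - Xbar) *v (Mp *v axis j 1))" for j :: 4
    by (simp add: fun_eq_iff column_matrix_mul matrix_vector_mult_basis)
  then show ?thesis
    using piecewise_kron_in_Sh[OF assms(9) on_l overlap traction]
    unfolding Let_def l_def[symmetric] Tp_def[symmetric] Tm_def[symmetric] Mp_def[symmetric]
    by simp
qed

end
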